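(* Let $F$ be a distribution function on $\mathbb{R}$ with finite non-zero variance, and consider the location-scale family $F((x-\theta_1)/\theta_2)$, $\theta_1\in\mathbb{R}$, $\theta_2>0$. Let $X^*_{1:n}\le\dots\le X^*_{n:n}$ be the order statistics of an i.i.d. sample of size $n$ from $F((x-\theta_1)/\theta_2)$. Then the classical (Lloyd's) BLUEs of $\theta_1$ and $\theta_2$ based on these order statistics are consistent as $n\to\infty$; moreover, their variances are $O(1/n)$ as $n\to\infty$.
   Context: The classical BLUE of $\theta_k$ ($k=1,2$) based on order statistics is the estimator of the form $\sum_{i=1}^n c_iX^*_{i:n}$ (constants $c_i$ depending on $n$ and $F$ only) that is unbiased for $\theta_k$ for all $(\theta_1,\theta_2)$ and has minimum variance among such estimators. *)

theory Defs
  imports "HOL-Probability.Probability" "HOL-Library.Landau_Symbols"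
begin

text \<open>The baseline law with distribution function F (F = cdf M), and the
  location-scale member F((x - t1)/t2): the law of t1 + t2 * Z, Z ~ M.\<close>
definition loc_scale :: "real measure \<Rightarrow> real \<Rightarrow> real \<Rightarrow> real measure" where
  "loc_scale M t1 t2 = distr M borel (\<lambda>z. t1 + t2 * z)"

definition sample :: "real measure \<Rightarrow> nat \<Rightarrow> real \<Rightarrow> real \<Rightarrow> (nat \<Rightarrow> real) measure" where
  "sample M n t1 t2 = PiM {..<n} (\<lambda>_. loc_scale M t1 t2)"

text \<open>Order statistics X*_{i+1:n} (0-indexed: i < n).\<close>
definition ord_stat :: "nat \<Rightarrow> (nat \<Rightarrow> real) \<Rightarrow> nat \<Rightarrow> real" where
  "ord_stat n x i = sort (map x [0..<n]) ! i"

definition lin_est :: "nat \<Rightarrow> (nat \<Rightarrow> real) \<Rightarrow> (nat \<Rightarrow> real) \<Rightarrow> real" where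
  "lin_est n c x = (\<Sum>i<n. c i * ord_stat n x i)"

definition theta :: "nat \<Rightarrow> real \<Rightarrow> real \<Rightarrow> real" where
  "theta k t1 t2 = (if k = 1 then t1 else t2)"

definition var_of :: "'a measure \<Rightarrow> ('a \<Rightarrow> real) \<Rightarrow> real" where
  "var_of P f = (LINT x|P. (f x - (LINT y|P. f y))\<^sup>2)"

definition unbiased :: "real measure \<Rightarrow> nat \<Rightarrow> nat \<Rightarrow> (nat \<Rightarrow> real) \<Rightarrow> bool" where
  "unbiased M k n c \<longleftrightarrow>
     (\<forall>t1 t2. t2 > 0 \<longrightarrow>
        integrable (sample M n t1 t2) (lin_est n c) \<and>
        (LINT x|sample M n t1 t2. lin_est n c x) = theta k t1 t2)"

definition is_BLUE :: "real measure \<Rightarrow> nat \<Rightarrow> nat \<Rightarrow> (nat \<Rightarrow> real) \<Rightarrow> bool" where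
  "is_BLUE M k n c \<longleftrightarrow> unbiased M k n c \<and>
     (\<forall>c'. unbiased M k n c' \<longrightarrow>
        (\<forall>t1 t2. t2 > 0 \<longrightarrow>
           var_of (sample M n t1 t2) (lin_est n c) \<le> var_of (sample M n t1 t2) (lin_est n c')))"

end

theory Submission
  imports Defs
begin

text \<open>
  A sample from \<open>F((x - \<theta>\<^sub>1) / \<theta>\<^sub>2)\<close> is the image of a sample from \<open>F\<close> under
  \<open>z \<mapsto> \<theta>\<^sub>1 + \<theta>\<^sub>2 z\<close>, and this map commutes with sorting. Hence a linear estimator
  \<open>\<Sum> c\<^sub>i X\<^sup>*\<^sub>i\<^sub>:\<^sub>n\<close> is unbiased for \<open>\<theta>\<^sub>k\<close> iff \<open>\<Sum> c\<^sub>i\<close> and \<open>\<Sum> c\<^sub>i \<alpha>\<^sub>i\<^sub>:\<^sub>n\<close> take prescribed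
  values, and its variance is \<open>\<theta>\<^sub>2\<^sup>2\<close> times its variance for \<open>(\<theta>\<^sub>1, \<theta>\<^sub>2) = (0, 1)\<close>.
  Minimising this variance over the affine space of unbiased coefficient vectors is a
  finite-dimensional least-squares problem, so the BLUE exists.

  For the rate it suffices to exhibit one unbiased linear estimator with variance \<open>O(1/n)\<close>:
  a combination of the sample mean and Gini's mean difference, the average of \<open>|X\<^sub>i - X\<^sub>j|\<close>
  over all pairs \<open>i \<noteq> j\<close>. Gini's identity makes it linear in the order statistics, and as a
  U-statistic of degree two its variance is \<open>O(1/n)\<close>. It can be made unbiased because Gini's
  mean difference of \<open>F\<close> is positive when \<open>F\<close> has positive variance. Consistency then
  follows from Chebyshev's inequality.
\<close>

section \<open>Order statistics and linear estimators\<close>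

lemma sum_ord_stat: "(\<Sum>i<n. g (ord_stat n x i)) = (\<Sum>i<n. g (x i))"
proof -
  have sum_list_conv: "sum_list (map g xs) = (\<Sum>i<length xs. g (xs ! i))" for xs :: "real list"
    by (simp add: sum_list_sum_nth atLeast0LessThan)
  have "(\<Sum>i<n. g (ord_stat n x i)) = sum_list (map g (sort (map x [0..<n])))"
    by (simp add: sum_list_conv ord_stat_def)
  also have "\<dots> = sum_list (map g (map x [0..<n]))"
    by (metis mset_map mset_sort sum_mset_sum_list)
  also have "\<dots> = (\<Sum>i<n. g (x i))"
    by (simp add: interv_sum_list_conv_sum_set_nat atLeast0LessThan)
  finally show ?thesis .
qed

lemma ord_stat_mono: "i \<le> j \<Longrightarrow> j < n \<Longrightarrow> ord_stat n x i \<le> ord_stat n x j"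
  unfolding ord_stat_def by (intro sorted_nth_mono) auto

lemma ord_stat_cong: "(\<And>j. j < n \<Longrightarrow> x j = y j) \<Longrightarrow> ord_stat n x = ord_stat n y"
proof -
  assume "\<And>j. j < n \<Longrightarrow> x j = y j"
  then have samples_eq: "map x [0..<n] = map y [0..<n]"
    by simp
  show ?thesis
    unfolding ord_stat_def samples_eq ..
qed

lemma ord_stat_affine:
  assumes "0 \<le> (t2::real)" and "i < n"
  shows "ord_stat n (\<lambda>j. t1 + t2 * x j) i = t1 + t2 * ord_stat n x i"
proof -
  let ?f = "\<lambda>v::real. t1 + t2 * v"
  have "sort (map ?f (map x [0..<n])) = map ?f (sort (map x [0..<n]))"
  proof (rule properties_for_sort)
    show "mset (map ?f (sort (map x [0..<n]))) = mset (map ?f (map x [0..<n]))"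
      by (simp only: mset_map mset_sort)
    show "sorted (map ?f (sort (map x [0..<n])))"
      unfolding sorted_map
      by (rule sorted_wrt_mono_rel[OF _ sorted_sort]) (use assms in \<open>auto intro: mult_left_mono\<close>)
  qed
  then show ?thesis
    using assms(2) by (simp add: ord_stat_def map_map o_def)
qed

lemma ord_stat_le_iff:
  assumes "i < n"
  shows "ord_stat n x i \<le> a \<longleftrightarrow> Suc i \<le> card {j\<in>{..<n}. x j \<le> a}"
proof -
  let ?S = "{j\<in>{..<n}. ord_stat n x j \<le> a}"
  have "card {j\<in>{..<n}. x j \<le> a} = (\<Sum>j<n. if x j \<le> a then 1 else 0)"
    by (simp add: sum.If_cases Int_def)
  also have "\<dots> = (\<Sum>j<n. if ord_stat n x j \<le> a then 1 else 0)"
    by (rule sum_ord_stat[symmetric])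
  also have "\<dots> = card ?S"
    by (simp add: sum.If_cases Int_def)
  finally have card_eq: "card {j\<in>{..<n}. x j \<le> a} = card ?S" .
  show ?thesis
  proof
    assume le: "ord_stat n x i \<le> a"
    have "{..i} \<subseteq> ?S"
    proof
      fix j
      assume "j \<in> {..i}"
      then show "j \<in> ?S"
        using ord_stat_mono[of j i n x] assms le by auto
    qed
    then show "Suc i \<le> card {j\<in>{..<n}. x j \<le> a}"
      unfolding card_eq using card_mono[of ?S "{..i}"] by simp
  next
    assume card_ge: "Suc i \<le> card {j\<in>{..<n}. x j \<le> a}"
    show "ord_stat n x i \<le> a"
    proof (rule ccontr)
      assume gt: "\<not> ord_stat n x i \<le> a"
      have "?S \<subseteq> {..<i}"
      proof
        fix j
        assume j: "j \<in> ?S"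
        show "j \<in> {..<i}"
        proof (rule ccontr)
          assume "j \<notin> {..<i}"
          then show False
            using ord_stat_mono[of i j n x] j gt by auto
        qed
      qed
      then show False
        using card_ge card_mono[of "{..<i}" ?S] unfolding card_eq by simp
    qed
  qed
qed

lemma ord_stat_square_le: "i < n \<Longrightarrow> (ord_stat n x i)\<^sup>2 \<le> (\<Sum>j<n. (x j)\<^sup>2)"
  using member_le_sum[of i "{..<n}" "\<lambda>j. (ord_stat n x j)\<^sup>2"] sum_ord_stat[of "\<lambda>v. v\<^sup>2"] by simp

lemma borel_measurable_ord_stat [measurable]:
  assumes "i < n"
  shows "(\<lambda>x. ord_stat n x i) \<in> borel_measurable (PiM {..<n} (\<lambda>_. borel))"
proof (rule borel_measurableI_le)
  fix a
  have "{x \<in> space (PiM {..<n} (\<lambda>_. borel)). ord_stat n x i \<le> a} =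
        {x \<in> space (PiM {..<n} (\<lambda>_. borel)). real (Suc i) \<le> (\<Sum>j<n. if x j \<le> a then 1 else 0)}"
    by (simp add: ord_stat_le_iff[OF assms] sum.If_cases Int_def flip: of_nat_Suc)
  also have "\<dots> \<in> sets (PiM {..<n} (\<lambda>_. borel))"
    by measurable
  finally show "{x \<in> space (PiM {..<n} (\<lambda>_. borel)). ord_stat n x i \<le> a}
      \<in> sets (PiM {..<n} (\<lambda>_. borel))" .
qed

lemma borel_measurable_lin_est [measurable]:
  "lin_est n c \<in> borel_measurable (PiM {..<n} (\<lambda>_. borel))"
  unfolding lin_est_def by measurable

lemma lin_est_cong: "(\<And>i. i < n \<Longrightarrow> c i = d i) \<Longrightarrow> lin_est n c = lin_est n d"
  unfolding lin_est_def by (intro ext sum.cong) auto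

definition loc_scale_map :: "real \<Rightarrow> real \<Rightarrow> nat \<Rightarrow> (nat \<Rightarrow> real) \<Rightarrow> nat \<Rightarrow> real" where
  "loc_scale_map t1 t2 n x = (\<lambda>i\<in>{..<n}. t1 + t2 * x i)"

lemma measurable_loc_scale_map [measurable]:
  "loc_scale_map t1 t2 n \<in> measurable (PiM {..<n} (\<lambda>_. borel)) (PiM {..<n} (\<lambda>_. borel))"
  unfolding loc_scale_map_def by measurable

lemma lin_est_loc_scale_map:
  assumes "0 \<le> t2"
  shows "lin_est n c (loc_scale_map t1 t2 n x) = t1 * (\<Sum>i<n. c i) + t2 * lin_est n c x"
proof -
  have sorted_map: "ord_stat n (loc_scale_map t1 t2 n x) = ord_stat n (\<lambda>j. t1 + t2 * x j)"
    by (rule ord_stat_cong) (simp add: loc_scale_map_def)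
  have "lin_est n c (loc_scale_map t1 t2 n x) = (\<Sum>i<n. c i * (t1 + t2 * ord_stat n x i))"
    unfolding lin_est_def sorted_map by (intro sum.cong refl) (simp add: ord_stat_affine[OF assms])
  also have "\<dots> = t1 * (\<Sum>i<n. c i) + t2 * lin_est n c x"
    by (simp add: lin_est_def distrib_left sum.distrib sum_distrib_left mult_ac)
  finally show ?thesis .
qed

lemma abs_diff_ord_stat:
  assumes "i < n" "j < n"
  shows "\<bar>ord_stat n x i - ord_stat n x j\<bar> = sgn (real i - real j) * (ord_stat n x i - ord_stat n x j)"
  using assms ord_stat_mono[of i j n x] ord_stat_mono[of j i n x]
  by (cases i j rule: linorder_cases) auto

lemma sgn_diff_antisym: "sgn (real i - real j) = - sgn (real j - real i :: real)"
  by (metis minus_diff_eq sgn_minus)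

lemma sum_sgn_diff_eq_zero: "(\<Sum>i<n. \<Sum>j<n. sgn (real i - real j)) = (0::real)"
proof -
  have "(\<Sum>i<n. \<Sum>j<n. sgn (real i - real j)) = (\<Sum>j<n. \<Sum>i<n. sgn (real i - real j) :: real)"
    by (rule sum.swap)
  also have "\<dots> = (\<Sum>j<n. \<Sum>i<n. - sgn (real j - real i))"
    by (intro sum.cong refl) (rule sgn_diff_antisym)
  finally show ?thesis
    by (simp add: sum_negf)
qed

text \<open>Gini's identity; the inner sum of signs equals \<open>2 i + 1 - n\<close> (0-indexed).\<close>
lemma sum_abs_diff_eq_ord_stat:
  "(\<Sum>i<n. \<Sum>j<n. \<bar>x i - x j\<bar>) = 2 * (\<Sum>i<n. (\<Sum>j<n. sgn (real i - real j)) * ord_stat n x i)"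
proof -
  let ?s = "ord_stat n x" and ?sg = "\<lambda>i j. sgn (real i - real j) :: real"
  have "(\<Sum>i<n. \<Sum>j<n. \<bar>x i - x j\<bar>) = (\<Sum>i<n. \<Sum>j<n. \<bar>x i - ?s j\<bar>)"
    using sum_ord_stat[where g="\<lambda>v. \<bar>x _ - v\<bar>"] by simp
  also have "\<dots> = (\<Sum>i<n. \<Sum>j<n. \<bar>?s i - ?s j\<bar>)"
    using sum_ord_stat[where g="\<lambda>u. \<Sum>j<n. \<bar>u - ?s j\<bar>"] by simp
  also have "\<dots> = (\<Sum>i<n. \<Sum>j<n. ?sg i j * ?s i) - (\<Sum>i<n. \<Sum>j<n. ?sg i j * ?s j)"
    by (simp add: abs_diff_ord_stat right_diff_distrib sum_subtractf)
  also have "(\<Sum>i<n. \<Sum>j<n. ?sg i j * ?s j) = (\<Sum>j<n. \<Sum>i<n. ?sg i j * ?s j)"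
    by (rule sum.swap)
  also have "\<dots> = (\<Sum>j<n. \<Sum>i<n. - (?sg j i * ?s j))"
    by (intro sum.cong refl) (subst sgn_diff_antisym, simp)
  also have "(\<Sum>i<n. \<Sum>j<n. ?sg i j * ?s i) = (\<Sum>i<n. (\<Sum>j<n. ?sg i j) * ?s i)"
    by (simp add: sum_distrib_right)
  finally show ?thesis
    by (simp add: sum_distrib_right sum_negf)
qed

section \<open>Square-integrable functions and least squares\<close>

definition square_integrable :: "'a measure \<Rightarrow> ('a \<Rightarrow> real) \<Rightarrow> bool" where
  "square_integrable N f \<longleftrightarrow> f \<in> borel_measurable N \<and> integrable N (\<lambda>x. (f x)\<^sup>2)"

lemma integrable_dominated:
  fixes g :: "'a \<Rightarrow> real"
  assumes "integrable N f" "g \<in> borel_measurable N" "\<And>x. \<bar>g x\<bar> \<le> f x"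
  shows "integrable N g"
proof (rule Bochner_Integration.integrable_bound[OF assms(1,2)])
  have "norm (g x) \<le> norm (f x)" for x
    using assms(3)[of x] abs_ge_self[of "f x"] by simp
  then show "AE x in N. norm (g x) \<le> norm (f x)"
    by simp
qed

lemma abs_mult_le_sum_squares: "\<bar>u * v\<bar> \<le> u\<^sup>2 + (v::real)\<^sup>2"
proof -
  have "2 * (\<bar>u\<bar> * \<bar>v\<bar>) \<le> u\<^sup>2 + v\<^sup>2"
    using sum_squares_bound[of "\<bar>u\<bar>" "\<bar>v\<bar>"] by (simp add: mult.assoc)
  moreover have "0 \<le> \<bar>u\<bar> * \<bar>v\<bar>"
    by simp
  ultimately show ?thesis
    unfolding abs_mult by linarith
qed

lemma square_integrable_mult_integrable:
  assumes "square_integrable N f" "square_integrable N g"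
  shows "integrable N (\<lambda>x. f x * g x)"
proof (rule integrable_dominated)
  show "integrable N (\<lambda>x. (f x)\<^sup>2 + (g x)\<^sup>2)"
    using assms unfolding square_integrable_def by simp
  show "(\<lambda>x. f x * g x) \<in> borel_measurable N"
    using assms unfolding square_integrable_def by (auto intro: borel_measurable_times)
  show "\<bar>f x * g x\<bar> \<le> (f x)\<^sup>2 + (g x)\<^sup>2" for x
    by (rule abs_mult_le_sum_squares)
qed

lemma square_integrable_add:
  assumes "square_integrable N f" "square_integrable N g"
  shows "square_integrable N (\<lambda>x. f x + g x)"
  unfolding square_integrable_def
proof
  show meas: "(\<lambda>x. f x + g x) \<in> borel_measurable N"
    using assms unfolding square_integrable_def by (auto intro: borel_measurable_add)
  show "integrable N (\<lambda>x. (f x + g x)\<^sup>2)"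
  proof (rule integrable_dominated)
    show "integrable N (\<lambda>x. 2 * (f x)\<^sup>2 + 2 * (g x)\<^sup>2)"
      using assms unfolding square_integrable_def by simp
    show "(\<lambda>x. (f x + g x)\<^sup>2) \<in> borel_measurable N"
      using meas by (rule borel_measurable_power)
    show "\<bar>(f x + g x)\<^sup>2\<bar> \<le> 2 * (f x)\<^sup>2 + 2 * (g x)\<^sup>2" for x
    proof -
      have "(f x + g x)\<^sup>2 \<le> 2 * (f x)\<^sup>2 + 2 * (g x)\<^sup>2"
        using sum_squares_bound[of "f x" "g x"] by (simp add: power2_sum)
      then show ?thesis
        by simp
    qed
  qed
qed

lemma square_integrable_cmult: "square_integrable N f \<Longrightarrow> square_integrable N (\<lambda>x. c * f x)"
  unfolding square_integrable_def by (auto simp: power_mult_distrib intro: borel_measurable_times)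

lemma square_integrable_diff:
  "square_integrable N f \<Longrightarrow> square_integrable N g \<Longrightarrow> square_integrable N (\<lambda>x. f x - g x)"
  using square_integrable_add[of N f "\<lambda>x. (- 1) * g x"] square_integrable_cmult[of N g "- 1"]
  by simp

lemma square_integrable_abs: "square_integrable N f \<Longrightarrow> square_integrable N (\<lambda>x. \<bar>f x\<bar>)"
  unfolding square_integrable_def by (auto intro: borel_measurable_abs)

lemma square_integrable_const: "finite_measure N \<Longrightarrow> square_integrable N (\<lambda>_. c)"
  unfolding square_integrable_def by (simp add: finite_measure.integrable_const)

lemma square_integrable_sum:
  assumes "finite I" "\<And>i. i \<in> I \<Longrightarrow> square_integrable N (f i)"
  shows "square_integrable N (\<lambda>x. \<Sum>i\<in>I. f i x)"
  using assms
proof (induction I rule: finite_induct)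
  case empty
  then show ?case
    by (simp add: square_integrable_def)
next
  case (insert i I)
  then show ?case
    using square_integrable_add[of N "f i" "\<lambda>x. \<Sum>i\<in>I. f i x"] by simp
qed

lemma square_integrable_integrable: "finite_measure N \<Longrightarrow> square_integrable N f \<Longrightarrow> integrable N f"
  unfolding square_integrable_def using finite_measure.square_integrable_imp_integrable by blast

lemma integral_square_add_scaled:
  assumes "square_integrable N f" "square_integrable N g"
  shows "(\<integral>x. (f x + t * g x)\<^sup>2 \<partial>N) =
    (\<integral>x. (f x)\<^sup>2 \<partial>N) + 2 * t * (\<integral>x. f x * g x \<partial>N) + t\<^sup>2 * (\<integral>x. (g x)\<^sup>2 \<partial>N)"
proof -
  have "(\<integral>x. (f x + t * g x)\<^sup>2 \<partial>N) = (\<integral>x. (f x)\<^sup>2 + 2 * t * (f x * g x) + t\<^sup>2 * (g x)\<^sup>2 \<partial>N)"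
    by (simp add: power2_eq_square algebra_simps)
  also have "\<dots> = (\<integral>x. (f x)\<^sup>2 \<partial>N) + 2 * t * (\<integral>x. f x * g x \<partial>N) + t\<^sup>2 * (\<integral>x. (g x)\<^sup>2 \<partial>N)"
    using assms square_integrable_mult_integrable[OF assms] unfolding square_integrable_def by simp
  finally show ?thesis .
qed

text \<open>If \<open>g = 0\<close> almost everywhere, the projection coefficient is \<open>0\<close> by the convention
  \<open>x / 0 = 0\<close>.\<close>
definition residual :: "'a measure \<Rightarrow> ('a \<Rightarrow> real) \<Rightarrow> ('a \<Rightarrow> real) \<Rightarrow> 'a \<Rightarrow> real" where
  "residual N g f x = f x - (\<integral>y. f y * g y \<partial>N) / (\<integral>y. (g y)\<^sup>2 \<partial>N) * g x"

lemma square_integrable_residual: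
  "square_integrable N f \<Longrightarrow> square_integrable N g \<Longrightarrow> square_integrable N (residual N g f)"
  unfolding residual_def by (intro square_integrable_diff square_integrable_cmult)

lemma integral_square_residual_le:
  assumes f: "square_integrable N f" and g: "square_integrable N g"
  shows "(\<integral>x. (residual N g f x)\<^sup>2 \<partial>N) \<le> (\<integral>x. (f x + t * g x)\<^sup>2 \<partial>N)"
proof -
  define A B C where "A = (\<integral>x. (f x)\<^sup>2 \<partial>N)" and "B = (\<integral>x. f x * g x \<partial>N)"
    and "C = (\<integral>x. (g x)\<^sup>2 \<partial>N)"
  have expand: "(\<integral>x. (f x + s * g x)\<^sup>2 \<partial>N) = A + 2 * s * B + s\<^sup>2 * C" for s
    unfolding A_def B_def C_def by (rule integral_square_add_scaled[OF f g])
  have residual_eq: "residual N g f x = f x + (- (B / C)) * g x" for x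
    unfolding residual_def B_def C_def by simp
  have "0 \<le> C"
    unfolding C_def by simp
  show ?thesis
  proof (cases "C = 0")
    case True
    have "B = 0"
    proof (rule ccontr)
      assume "B \<noteq> 0"
      \<comment> \<open>\<open>s \<mapsto> \<integral>(f + s g)\<^sup>2 = A + 2 s B\<close> is a nonnegative affine function, so its slope vanishes.\<close>
      have "0 \<le> (\<integral>x. (f x + (- (A + 1) / (2 * B)) * g x)\<^sup>2 \<partial>N)"
        by simp
      with \<open>B \<noteq> 0\<close> show False
        unfolding expand True by (simp add: field_simps)
    qed
    then show ?thesis
      unfolding residual_eq expand True by simp
  next
    case False
    then have "0 < C"
      using \<open>0 \<le> C\<close> by simp
    then have "A + 2 * t * B + t\<^sup>2 * C - (A + 2 * (- (B / C)) * B + (- (B / C))\<^sup>2 * C)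
        = (t * C + B)\<^sup>2 / C"
      by (simp add: field_simps power2_eq_square)
    moreover have "0 \<le> (t * C + B)\<^sup>2 / C"
      using \<open>0 < C\<close> by simp
    ultimately show ?thesis
      unfolding residual_eq expand by linarith
  qed
qed

lemma residual_lincomb:
  assumes "finite J" "square_integrable N g" "square_integrable N W0"
    and "\<And>j. j \<in> J \<Longrightarrow> square_integrable N (W j)"
  shows "residual N g (\<lambda>x. W0 x + (\<Sum>j\<in>J. v j * W j x)) x =
    residual N g W0 x + (\<Sum>j\<in>J. v j * residual N g (W j) x)"
proof -
  have "(\<integral>y. (W0 y + (\<Sum>j\<in>J. v j * W j y)) * g y \<partial>N) =
      (\<integral>y. W0 y * g y + (\<Sum>j\<in>J. v j * (W j y * g y)) \<partial>N)"
    by (simp add: distrib_right sum_distrib_right mult.assoc)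
  also have "\<dots> = (\<integral>y. W0 y * g y \<partial>N) + (\<Sum>j\<in>J. v j * (\<integral>y. W j y * g y \<partial>N))"
    using assms square_integrable_mult_integrable[of N _ g]
    by (subst Bochner_Integration.integral_add) (auto simp: integrable_sum integral_sum)
  finally show ?thesis
    unfolding residual_def
    by (simp add: algebra_simps add_divide_distrib sum_divide_distrib sum_distrib_left
        sum_distrib_right sum_subtractf)
qed

text \<open>Induction on the number of directions: projecting everything onto the orthogonal
  complement of one direction \<open>W\<^sub>r\<close> eliminates it.\<close>
lemma least_squares_exists:
  assumes "finite J" "square_integrable N W0" "\<And>j. j \<in> J \<Longrightarrow> square_integrable N (W j)"
  shows "\<exists>u. \<forall>v. (\<integral>x. (W0 x + (\<Sum>j\<in>J. u j * W j x))\<^sup>2 \<partial>N) \<le> (\<integral>x. (W0 x + (\<Sum>j\<in>J. v j * W j x))\<^sup>2 \<partial>N)"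
  using assms
proof (induction J arbitrary: W0 W rule: finite_induct)
  case empty
  then show ?case
    by simp
next
  case (insert r J)
  let ?R = "residual N (W r)"
  define X where "X v x = W0 x + (\<Sum>j\<in>J. v j * W j x)" for v x
  have split: "W0 x + (\<Sum>j\<in>insert r J. v j * W j x) = X v x + v r * W r x" for v x
    unfolding X_def using insert.hyps by (simp add: algebra_simps)
  have W0: "square_integrable N W0" and Wr: "square_integrable N (W r)"
    and WJ: "\<And>j. j \<in> J \<Longrightarrow> square_integrable N (W j)"
    using insert.prems by auto
  have X: "square_integrable N (X v)" for v
    unfolding X_def using W0 WJ insert.hyps
    by (intro square_integrable_add square_integrable_sum square_integrable_cmult) auto
  have R_X: "?R (X v) x = ?R W0 x + (\<Sum>j\<in>J. v j * ?R (W j) x)" for v x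
    unfolding X_def by (rule residual_lincomb[OF insert.hyps(1) Wr W0 WJ])
  obtain u' where u': "\<And>v. (\<integral>x. (?R W0 x + (\<Sum>j\<in>J. u' j * ?R (W j) x))\<^sup>2 \<partial>N)
      \<le> (\<integral>x. (?R W0 x + (\<Sum>j\<in>J. v j * ?R (W j) x))\<^sup>2 \<partial>N)"
    using insert.IH[of "?R W0" "\<lambda>j. ?R (W j)"] W0 Wr WJ square_integrable_residual by blast
  define t0 where "t0 = - ((\<integral>y. X u' y * W r y \<partial>N) / (\<integral>y. (W r y)\<^sup>2 \<partial>N))"
  define u where "u = u'(r := t0)"
  have X_u: "X u = X u'"
    unfolding X_def u_def using insert.hyps
    by (intro ext arg_cong2[where f="(+)"] refl sum.cong) auto
  show ?case
  proof (intro exI allI)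
    fix v
    have "(\<integral>x. (W0 x + (\<Sum>j\<in>insert r J. u j * W j x))\<^sup>2 \<partial>N) = (\<integral>x. (?R (X u') x)\<^sup>2 \<partial>N)"
      unfolding split X_u by (simp add: u_def t0_def residual_def)
    also have "\<dots> \<le> (\<integral>x. (?R (X v) x)\<^sup>2 \<partial>N)"
      unfolding R_X by (rule u')
    also have "\<dots> \<le> (\<integral>x. (X v x + v r * W r x)\<^sup>2 \<partial>N)"
      by (rule integral_square_residual_le[OF X Wr])
    finally show "(\<integral>x. (W0 x + (\<Sum>j\<in>insert r J. u j * W j x))\<^sup>2 \<partial>N)
        \<le> (\<integral>x. (W0 x + (\<Sum>j\<in>insert r J. v j * W j x))\<^sup>2 \<partial>N)"
      unfolding split .
  qed
qed

section \<open>Samples from the location-scale family\<close>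

locale iid_std_sample = real_distribution M for M :: "real measure"
begin

definition std_sample :: "nat \<Rightarrow> (nat \<Rightarrow> real) measure" where
  "std_sample n = PiM {..<n} (\<lambda>_. M)"

lemma prob_space_std_sample: "prob_space (std_sample n)"
  unfolding std_sample_def by (intro prob_space_PiM) (simp add: prob_space_axioms)

lemma finite_measure_std_sample: "finite_measure (std_sample n)"
  using prob_space_std_sample by (simp add: prob_space_def)

lemma sets_std_sample: "sets (std_sample n) = sets (PiM {..<n} (\<lambda>_. borel))"
  unfolding std_sample_def by (intro sets_PiM_cong) simp_all

lemma space_std_sample: "space (std_sample n) = space (PiM {..<n} (\<lambda>_. borel))"
  using sets_std_sample by (rule sets_eq_imp_space_eq)

lemma borel_measurable_std_sample:
  "f \<in> borel_measurable (PiM {..<n} (\<lambda>_. borel)) \<Longrightarrow> f \<in> borel_measurable (std_sample n)"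
  using measurable_cong_sets[OF sets_std_sample refl] by blast

lemma measurable_component_std_sample: "i < n \<Longrightarrow> (\<lambda>x. x i) \<in> measurable (std_sample n) M"
  unfolding std_sample_def by (rule measurable_component_singleton) simp

lemma borel_measurable_component_std_sample: "i < n \<Longrightarrow> (\<lambda>x. x i) \<in> borel_measurable (std_sample n)"
  using measurable_component_std_sample measurable_cong_sets[OF refl events_eq_borel] by blast

lemma distr_component_std_sample: "i < n \<Longrightarrow> distr (std_sample n) M (\<lambda>x. x i) = M"
  unfolding std_sample_def by (rule distr_PiM_component) (simp_all add: prob_space_axioms)

lemma distr_borel_component_std_sample: "i < n \<Longrightarrow> distr (std_sample n) borel (\<lambda>x. x i) = M"
  using distr_component_std_sample[of i n] by (simp cong: distr_cong)

lemma integrable_component_std_sample: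
  fixes f :: "real \<Rightarrow> real"
  shows "i < n \<Longrightarrow> integrable M f \<Longrightarrow> integrable (std_sample n) (\<lambda>x. f (x i))"
  using integrable_distr_eq[OF measurable_component_std_sample, of i n f] distr_component_std_sample
  by simp

lemma integral_component_std_sample:
  fixes f :: "real \<Rightarrow> real"
  shows "i < n \<Longrightarrow> f \<in> borel_measurable M \<Longrightarrow> (\<integral>x. f (x i) \<partial>std_sample n) = (\<integral>x. f x \<partial>M)"
  using integral_distr[OF measurable_component_std_sample, of i n f] distr_component_std_sample
  by simp

lemma indep_components_std_sample:
  assumes "0 < n"
  shows "prob_space.indep_vars (std_sample n) (\<lambda>_. borel) (\<lambda>i x. x i) {..<n}"
proof -
  interpret S: prob_space "std_sample n"
    by (rule prob_space_std_sample)
  have "distr (std_sample n) (PiM {..<n} (\<lambda>_. borel)) (\<lambda>x. \<lambda>i\<in>{..<n}. x i) =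
      distr (std_sample n) (std_sample n) (\<lambda>x. x)"
    by (rule distr_cong)
      (auto simp: sets_std_sample space_std_sample space_PiM PiE_def extensional_restrict)
  also have "\<dots> = std_sample n"
    by (rule distr_id2) simp
  also have "\<dots> = PiM {..<n} (\<lambda>i. distr (std_sample n) borel (\<lambda>x. x i))"
    unfolding std_sample_def by (intro PiM_cong)
      (simp_all add: distr_borel_component_std_sample[unfolded std_sample_def])
  finally show ?thesis
    using S.indep_vars_iff_distr_eq_PiM'[where I="{..<n}" and M'="\<lambda>_. borel" and X="\<lambda>i x. x i"]
      assms borel_measurable_component_std_sample by auto
qed

lemma indep_disjoint_blocks_std_sample:
  assumes "0 < n" "A \<subseteq> {..<n}" "B \<subseteq> {..<n}" "A \<inter> B = {}"
  shows "prob_space.indep_var (std_sample n)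
    (PiM A (\<lambda>_. borel)) (\<lambda>x. restrict x A) (PiM B (\<lambda>_. borel)) (\<lambda>x. restrict x B)"
proof -
  interpret S: prob_space "std_sample n"
    by (rule prob_space_std_sample)
  let ?K = "\<lambda>b. if b then A else B"
  have "S.indep_vars (\<lambda>b. PiM (?K b) (\<lambda>_. borel)) (\<lambda>b x. restrict (\<lambda>i. x i) (?K b)) UNIV"
    using assms
    by (intro S.indep_vars_restrict[OF indep_components_std_sample])
      (auto simp: disjoint_family_on_def)
  then show ?thesis
    unfolding S.indep_var_def
    by (rule S.indep_vars_cong[THEN iffD1, rotated 3]) (auto split: bool.split)
qed

lemma integral_mult_indep_blocks:
  fixes f g :: "(nat \<Rightarrow> real) \<Rightarrow> real"
  assumes "0 < n" "A \<subseteq> {..<n}" "B \<subseteq> {..<n}" "A \<inter> B = {}"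
    and [measurable]: "f \<in> borel_measurable (PiM A (\<lambda>_. borel))"
      "g \<in> borel_measurable (PiM B (\<lambda>_. borel))"
    and "integrable (std_sample n) (\<lambda>x. f (restrict x A))"
      "integrable (std_sample n) (\<lambda>x. g (restrict x B))"
  shows "(\<integral>x. f (restrict x A) * g (restrict x B) \<partial>std_sample n) =
    (\<integral>x. f (restrict x A) \<partial>std_sample n) * (\<integral>x. g (restrict x B) \<partial>std_sample n)"
proof -
  interpret S: prob_space "std_sample n"
    by (rule prob_space_std_sample)
  have "S.indep_var borel (f \<circ> (\<lambda>x. restrict x A)) borel (g \<circ> (\<lambda>x. restrict x B))"
    by (rule S.indep_var_compose[OF indep_disjoint_blocks_std_sample[OF assms(1-4)]]) simp_all
  from S.indep_var_lebesgue_integral[OF this] assms(7,8) show ?thesis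
    by (simp add: o_def)
qed

lemma distr_pair_std_sample:
  assumes "i < n" "j < n" "i \<noteq> j"
  shows "distr (std_sample n) (borel \<Otimes>\<^sub>M borel) (\<lambda>x. (x i, x j)) = M \<Otimes>\<^sub>M M"
proof -
  interpret S: prob_space "std_sample n"
    by (rule prob_space_std_sample)
  have "S.indep_var
      borel ((\<lambda>y. y i) \<circ> (\<lambda>x. restrict x {i})) borel ((\<lambda>y. y j) \<circ> (\<lambda>x. restrict x {j}))"
    using assms
    by (intro S.indep_var_compose[OF indep_disjoint_blocks_std_sample])
      (simp_all add: measurable_component_singleton)
  then have "S.indep_var borel (\<lambda>x. x i) borel (\<lambda>x. x j)"
    by (simp add: o_def)
  then show ?thesis
    using distr_borel_component_std_sample assms unfolding S.indep_var_distribution_eq by simp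
qed

lemma sets_loc_scale: "sets (loc_scale M t1 t2) = sets borel"
  unfolding loc_scale_def by simp

lemma prob_space_loc_scale: "prob_space (loc_scale M t1 t2)"
  unfolding loc_scale_def by (rule prob_space_distr) simp

lemma prob_space_sample: "prob_space (sample M n t1 t2)"
  unfolding sample_def by (intro prob_space_PiM prob_space_loc_scale)

lemma sample_eq_distr_std_sample:
  "sample M n t1 t2 = distr (std_sample n) (PiM {..<n} (\<lambda>_. borel)) (loc_scale_map t1 t2 n)"
proof -
  let ?f = "\<lambda>z::real. t1 + t2 * z" and ?L = "loc_scale M t1 t2"
  have f: "?f \<in> measurable M ?L"
    unfolding measurable_cong_sets[OF events_eq_borel sets_loc_scale] by measurable
  have "sample M n t1 t2 = PiM {..<n} (\<lambda>_. distr M ?L ?f)"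
    unfolding sample_def loc_scale_def by (intro PiM_cong refl) (simp cong: distr_cong)
  also have "\<dots> = distr (std_sample n) (PiM {..<n} (\<lambda>_. ?L)) (compose {..<n} ?f)"
    unfolding std_sample_def
    by (rule distr_PiM_finite_prob_space'[symmetric])
      (simp_all add: prob_space_axioms prob_space_loc_scale f)
  also have "\<dots> = distr (std_sample n) (PiM {..<n} (\<lambda>_. borel)) (loc_scale_map t1 t2 n)"
    by (rule distr_cong)
      (simp_all add: sets_loc_scale compose_def loc_scale_map_def cong: sets_PiM_cong)
  finally show ?thesis .
qed

lemma measurable_loc_scale_map_std_sample:
  "loc_scale_map t1 t2 n \<in> measurable (std_sample n) (PiM {..<n} (\<lambda>_. borel))"
  using measurable_cong_sets[OF sets_std_sample refl] measurable_loc_scale_map by blast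

lemma integral_sample:
  fixes g :: "(nat \<Rightarrow> real) \<Rightarrow> real"
  assumes "g \<in> borel_measurable (PiM {..<n} (\<lambda>_. borel))"
  shows "(\<integral>y. g y \<partial>sample M n t1 t2) = (\<integral>x. g (loc_scale_map t1 t2 n x) \<partial>std_sample n)"
  using assms unfolding sample_eq_distr_std_sample
  by (rule integral_distr[OF measurable_loc_scale_map_std_sample])

lemma integrable_sample_iff:
  fixes g :: "(nat \<Rightarrow> real) \<Rightarrow> real"
  assumes "g \<in> borel_measurable (PiM {..<n} (\<lambda>_. borel))"
  shows "integrable (sample M n t1 t2) g \<longleftrightarrow>
    integrable (std_sample n) (\<lambda>x. g (loc_scale_map t1 t2 n x))"
  using assms unfolding sample_eq_distr_std_sample
  by (rule integrable_distr_eq[OF measurable_loc_scale_map_std_sample])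

end

section \<open>Unbiased linear estimators\<close>

definition loc_coeff :: "nat \<Rightarrow> real" where
  "loc_coeff k = (if k = 1 then 1 else 0)"

definition scale_coeff :: "nat \<Rightarrow> real" where
  "scale_coeff k = (if k = 1 then 0 else 1)"

lemma theta_eq: "theta k t1 t2 = t1 * loc_coeff k + t2 * scale_coeff k"
  unfolding theta_def loc_coeff_def scale_coeff_def by simp

lemma var_of_nonneg: "0 \<le> var_of N f"
  unfolding var_of_def by simp

locale iid_std_sample_L2 = iid_std_sample +
  assumes integrable_square: "integrable M (\<lambda>x. x\<^sup>2)"
begin

lemma square_integrable_component: "i < n \<Longrightarrow> square_integrable (std_sample n) (\<lambda>x. x i)"
  unfolding square_integrable_def
  using borel_measurable_component_std_sample integrable_component_std_sample[OF _ integrable_square]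
  by simp

lemma square_integrable_ord_stat:
  assumes "i < n"
  shows "square_integrable (std_sample n) (\<lambda>x. ord_stat n x i)"
proof -
  have meas: "(\<lambda>x. ord_stat n x i) \<in> borel_measurable (std_sample n)"
    using assms by (intro borel_measurable_std_sample borel_measurable_ord_stat)
  have "integrable (std_sample n) (\<lambda>x. (ord_stat n x i)\<^sup>2)"
  proof (rule integrable_dominated)
    show "integrable (std_sample n) (\<lambda>x. \<Sum>j<n. (x j)\<^sup>2)"
      using integrable_component_std_sample[OF _ integrable_square] by auto
    show "(\<lambda>x. (ord_stat n x i)\<^sup>2) \<in> borel_measurable (std_sample n)"
      using meas by (rule borel_measurable_power)
    show "\<bar>(ord_stat n x i)\<^sup>2\<bar> \<le> (\<Sum>j<n. (x j)\<^sup>2)" for x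
      using ord_stat_square_le[OF assms] by simp
  qed
  with meas show ?thesis
    unfolding square_integrable_def by simp
qed

lemma square_integrable_lin_est: "square_integrable (std_sample n) (lin_est n c)"
  unfolding lin_est_def
  by (intro square_integrable_sum square_integrable_cmult square_integrable_ord_stat) auto

lemma integrable_lin_est: "integrable (std_sample n) (lin_est n c)"
  by (rule square_integrable_integrable[OF finite_measure_std_sample square_integrable_lin_est])

definition exp_ord_stat :: "nat \<Rightarrow> nat \<Rightarrow> real" where
  "exp_ord_stat n i = (\<integral>x. ord_stat n x i \<partial>std_sample n)"

lemma integral_lin_est: "(\<integral>x. lin_est n c x \<partial>std_sample n) = (\<Sum>i<n. c i * exp_ord_stat n i)"
proof -
  have "integrable (std_sample n) (\<lambda>x. ord_stat n x i)" if "i < n" for i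
    using square_integrable_integrable[OF finite_measure_std_sample square_integrable_ord_stat[OF that]] .
  then show ?thesis
    unfolding lin_est_def exp_ord_stat_def by (simp add: integral_sum)
qed

lemma borel_measurable_sample:
  "f \<in> borel_measurable (PiM {..<n} (\<lambda>_. borel)) \<Longrightarrow> f \<in> borel_measurable (sample M n t1 t2)"
  unfolding sample_eq_distr_std_sample by simp

lemma square_integrable_lin_est_sample:
  assumes "0 \<le> t2"
  shows "square_integrable (sample M n t1 t2) (lin_est n c)"
proof -
  have "square_integrable (std_sample n) (\<lambda>x. t1 * (\<Sum>i<n. c i) + t2 * lin_est n c x)"
    by (intro square_integrable_add square_integrable_const square_integrable_cmult
        square_integrable_lin_est finite_measure_std_sample)
  then show ?thesis
    using assms unfolding square_integrable_def
    by (simp add: integrable_sample_iff[of "\<lambda>y. (lin_est n c y)\<^sup>2"] lin_est_loc_scale_map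
        borel_measurable_sample)
qed

lemma integral_lin_est_sample:
  assumes "0 \<le> t2"
  shows "(\<integral>y. lin_est n c y \<partial>sample M n t1 t2) =
    t1 * (\<Sum>i<n. c i) + t2 * (\<integral>x. lin_est n c x \<partial>std_sample n)"
proof -
  interpret S: prob_space "std_sample n"
    by (rule prob_space_std_sample)
  show ?thesis
    using integrable_lin_est assms by (simp add: integral_sample lin_est_loc_scale_map S.prob_space)
qed

lemma var_lin_est_sample:
  assumes "0 \<le> t2"
  shows "var_of (sample M n t1 t2) (lin_est n c) = t2\<^sup>2 * var_of (std_sample n) (lin_est n c)"
proof -
  let ?m = "\<integral>x. lin_est n c x \<partial>std_sample n"
  have "var_of (sample M n t1 t2) (lin_est n c) =
      (\<integral>x. (t1 * (\<Sum>i<n. c i) + t2 * lin_est n c x - (t1 * (\<Sum>i<n. c i) + t2 * ?m))\<^sup>2 \<partial>std_sample n)"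
    unfolding var_of_def integral_lin_est_sample[OF assms]
    by (simp add: integral_sample lin_est_loc_scale_map assms)
  also have "\<dots> = (\<integral>x. t2\<^sup>2 * (lin_est n c x - ?m)\<^sup>2 \<partial>std_sample n)"
    by (simp add: power2_eq_square algebra_simps)
  finally show ?thesis
    unfolding var_of_def by simp
qed

lemma unbiased_iff:
  "unbiased M k n c \<longleftrightarrow> (\<Sum>i<n. c i) = loc_coeff k \<and> (\<Sum>i<n. c i * exp_ord_stat n i) = scale_coeff k"
proof
  assume "unbiased M k n c"
  then have "(\<integral>y. lin_est n c y \<partial>sample M n t1 1) = theta k t1 1" for t1
    unfolding unbiased_def by simp
  from this[of 0] this[of 1] show
    "(\<Sum>i<n. c i) = loc_coeff k \<and> (\<Sum>i<n. c i * exp_ord_stat n i) = scale_coeff k"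
    by (simp add: integral_lin_est_sample integral_lin_est theta_eq)
next
  assume "(\<Sum>i<n. c i) = loc_coeff k \<and> (\<Sum>i<n. c i * exp_ord_stat n i) = scale_coeff k"
  then show "unbiased M k n c"
    unfolding unbiased_def
    using square_integrable_integrable[OF prob_space.finite_measure[OF prob_space_sample]
        square_integrable_lin_est_sample]
    by (simp add: integral_lin_est_sample integral_lin_est theta_eq)
qed

lemma var_of_unbiased:
  "unbiased M k n c \<Longrightarrow>
    var_of (std_sample n) (lin_est n c) = (\<integral>x. (lin_est n c x - scale_coeff k)\<^sup>2 \<partial>std_sample n)"
  unfolding unbiased_iff var_of_def integral_lin_est by simp

text \<open>Since variances on the whole family are \<open>\<theta>\<^sub>2\<^sup>2\<close> times the variance at the standard
  sample, minimality needs to be checked only there.\<close>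
lemma is_BLUE_if_min_var:
  assumes "unbiased M k n c"
    and "\<And>c'. unbiased M k n c' \<Longrightarrow>
      var_of (std_sample n) (lin_est n c) \<le> var_of (std_sample n) (lin_est n c')"
  shows "is_BLUE M k n c"
  using assms unfolding is_BLUE_def by (simp add: var_lin_est_sample mult_left_mono)

end

section \<open>U-statistics of degree two\<close>

definition off_diag :: "nat \<Rightarrow> (nat \<times> nat) set" where
  "off_diag n = Sigma {..<n} (\<lambda>i. {..<n} - {i})"

lemma mem_off_diag: "p \<in> off_diag n \<longleftrightarrow> fst p < n \<and> snd p < n \<and> fst p \<noteq> snd p"
  unfolding off_diag_def by (cases p) auto

lemma finite_off_diag [simp]: "finite (off_diag n)"
  unfolding off_diag_def by auto

lemma card_off_diag: "card (off_diag n) = n * (n - 1)"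
proof -
  have "card (off_diag n) = (\<Sum>i<n. card ({..<n} - {i}))"
    unfolding off_diag_def by (simp add: card_SigmaI)
  also have "\<dots> = (\<Sum>i<n. n - 1)"
    by (intro sum.cong) auto
  finally show ?thesis
    by simp
qed

lemma sum_off_diag:
  fixes f :: "nat \<Rightarrow> nat \<Rightarrow> real"
  shows "(\<Sum>p\<in>off_diag n. f (fst p) (snd p)) = (\<Sum>i<n. \<Sum>j<n. f i j) - (\<Sum>i<n. f i i)"
proof -
  have "(\<Sum>p\<in>off_diag n. f (fst p) (snd p)) = (\<Sum>i<n. \<Sum>j\<in>{..<n} - {i}. f i j)"
    unfolding off_diag_def by (simp add: sum.Sigma split_def)
  also have "\<dots> = (\<Sum>i<n. (\<Sum>j<n. f i j) - f i i)"
    by (intro sum.cong refl) (simp add: sum_diff1)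
  finally show ?thesis
    by (simp add: sum_subtractf)
qed

lemma card_off_diag_overlapping:
  "card {q \<in> off_diag n. {fst p, snd p} \<inter> {fst q, snd q} \<noteq> {}} \<le> 4 * n"
proof -
  let ?A = "{fst p, snd p}"
  have "{q \<in> off_diag n. ?A \<inter> {fst q, snd q} \<noteq> {}} \<subseteq> ?A \<times> {..<n} \<union> {..<n} \<times> ?A"
    by (auto simp: mem_off_diag)
  then have "card {q \<in> off_diag n. ?A \<inter> {fst q, snd q} \<noteq> {}} \<le> card (?A \<times> {..<n} \<union> {..<n} \<times> ?A)"
    by (intro card_mono) auto
  also have "\<dots> \<le> card (?A \<times> {..<n}) + card ({..<n} \<times> ?A)"
    by (rule card_Un_le)
  also have "\<dots> = 2 * (card ?A * n)"
    by (simp add: card_cartesian_product)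
  also have "\<dots> \<le> 2 * (2 * n)"
    by (intro mult_left_mono mult_right_mono) (auto simp: card_insert_if)
  finally show ?thesis
    by simp
qed

definition ustat :: "(real \<times> real \<Rightarrow> real) \<Rightarrow> nat \<Rightarrow> (nat \<Rightarrow> real) \<Rightarrow> real" where
  "ustat h n x = (\<Sum>p\<in>off_diag n. h (x (fst p), x (snd p))) / real (n * (n - 1))"

context iid_std_sample
begin

lemma measurable_pair_std_sample:
  "i < n \<Longrightarrow> j < n \<Longrightarrow> (\<lambda>x. (x i, x j)) \<in> measurable (std_sample n) (borel \<Otimes>\<^sub>M borel)"
  by (intro measurable_Pair borel_measurable_component_std_sample)

lemma integral_pair_std_sample:
  fixes h :: "real \<times> real \<Rightarrow> real"
  assumes "i < n" "j < n" "i \<noteq> j" "h \<in> borel_measurable (borel \<Otimes>\<^sub>M borel)"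
  shows "(\<integral>x. h (x i, x j) \<partial>std_sample n) = (\<integral>z. h z \<partial>(M \<Otimes>\<^sub>M M))"
  using integral_distr[OF measurable_pair_std_sample[OF assms(1,2)] assms(4)]
  by (simp add: distr_pair_std_sample[OF assms(1-3)])

lemma integrable_pair_std_sample_iff:
  fixes h :: "real \<times> real \<Rightarrow> real"
  assumes "i < n" "j < n" "i \<noteq> j" "h \<in> borel_measurable (borel \<Otimes>\<^sub>M borel)"
  shows "integrable (std_sample n) (\<lambda>x. h (x i, x j)) \<longleftrightarrow> integrable (M \<Otimes>\<^sub>M M) h"
  using integrable_distr_eq[OF measurable_pair_std_sample[OF assms(1,2)] assms(4)]
  by (simp add: distr_pair_std_sample[OF assms(1-3)])

lemma prob_space_pair_M: "prob_space (M \<Otimes>\<^sub>M M)"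
  by (intro prob_space_pair prob_space_axioms)

lemma sets_pair_M: "sets (M \<Otimes>\<^sub>M M) = sets (borel \<Otimes>\<^sub>M borel)"
  by (intro sets_pair_measure_cong) simp_all

context
  fixes h :: "real \<times> real \<Rightarrow> real"
  assumes measurable_kernel [measurable]: "h \<in> borel_measurable (borel \<Otimes>\<^sub>M borel)"
    and integrable_square_kernel: "integrable (M \<Otimes>\<^sub>M M) (\<lambda>z. (h z)\<^sup>2)"
begin

definition centered_kernel :: "nat \<times> nat \<Rightarrow> (nat \<Rightarrow> real) \<Rightarrow> real" where
  "centered_kernel p x = h (x (fst p), x (snd p)) - (\<integral>z. h z \<partial>(M \<Otimes>\<^sub>M M))"

lemma square_integrable_kernel: "square_integrable (M \<Otimes>\<^sub>M M) h"
  unfolding square_integrable_def using integrable_square_kernel measurable_cong_sets[OF sets_pair_M refl]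
  by auto

lemma integrable_kernel_component_pair:
  assumes "p \<in> off_diag n"
  shows "integrable (std_sample n) (\<lambda>x. h (x (fst p), x (snd p)))"
proof -
  have "finite_measure (M \<Otimes>\<^sub>M M)"
    using prob_space_pair_M by (simp add: prob_space_def)
  then show ?thesis
    using assms square_integrable_integrable[OF _ square_integrable_kernel]
    by (subst integrable_pair_std_sample_iff) (auto simp: mem_off_diag)
qed

lemma square_integrable_centered_kernel_pair:
  "square_integrable (M \<Otimes>\<^sub>M M) (\<lambda>z. h z - (\<integral>z. h z \<partial>(M \<Otimes>\<^sub>M M)))"
proof (rule square_integrable_diff)
  show "square_integrable (M \<Otimes>\<^sub>M M) h"
    by (rule square_integrable_kernel)
  show "square_integrable (M \<Otimes>\<^sub>M M) (\<lambda>_. \<integral>z. h z \<partial>(M \<Otimes>\<^sub>M M))"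
    using prob_space_pair_M by (intro square_integrable_const) (simp add: prob_space_def)
qed

lemma square_integrable_centered_kernel:
  assumes "p \<in> off_diag n"
  shows "square_integrable (std_sample n) (centered_kernel p)"
proof -
  let ?g = "\<lambda>z. h z - (\<integral>z. h z \<partial>(M \<Otimes>\<^sub>M M))"
  have ij: "fst p < n" "snd p < n" "fst p \<noteq> snd p"
    using assms by (auto simp: mem_off_diag)
  have "integrable (std_sample n) (\<lambda>x. (?g (x (fst p), x (snd p)))\<^sup>2)"
    using square_integrable_centered_kernel_pair unfolding square_integrable_def
    by (subst integrable_pair_std_sample_iff[OF ij, where h="\<lambda>z. (?g z)\<^sup>2"]) simp_all
  moreover have "(\<lambda>x. ?g (x (fst p), x (snd p))) \<in> borel_measurable (std_sample n)"
    using measurable_pair_std_sample[OF ij(1,2)] by measurable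
  ultimately show ?thesis
    unfolding square_integrable_def centered_kernel_def by simp
qed

lemma integral_centered_kernel:
  assumes "p \<in> off_diag n"
  shows "(\<integral>x. centered_kernel p x \<partial>std_sample n) = 0"
proof -
  interpret S: prob_space "std_sample n"
    by (rule prob_space_std_sample)
  have ij: "fst p < n" "snd p < n" "fst p \<noteq> snd p"
    using assms by (auto simp: mem_off_diag)
  show ?thesis
    using integrable_kernel_component_pair[OF assms]
    unfolding centered_kernel_def
    by (simp add: integral_pair_std_sample[OF ij measurable_kernel] S.prob_space)
qed

lemma integrable_centered_kernel:
  "p \<in> off_diag n \<Longrightarrow> integrable (std_sample n) (centered_kernel p)"
  using square_integrable_integrable[OF finite_measure_std_sample square_integrable_centered_kernel]
  .

lemma integral_square_centered_kernel:
  assumes "p \<in> off_diag n"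
  shows "(\<integral>x. (centered_kernel p x)\<^sup>2 \<partial>std_sample n) = var_of (M \<Otimes>\<^sub>M M) h"
proof -
  have ij: "fst p < n" "snd p < n" "fst p \<noteq> snd p"
    using assms by (auto simp: mem_off_diag)
  show ?thesis
    unfolding centered_kernel_def var_of_def
    by (rule integral_pair_std_sample[OF ij, where h="\<lambda>z. (h z - (\<integral>z. h z \<partial>(M \<Otimes>\<^sub>M M)))\<^sup>2"]) simp
qed

lemma integral_mult_centered_kernel_le:
  assumes "p \<in> off_diag n" "q \<in> off_diag n"
  shows "(\<integral>x. centered_kernel p x * centered_kernel q x \<partial>std_sample n) \<le> var_of (M \<Otimes>\<^sub>M M) h"
proof -
  have sq: "square_integrable (std_sample n) (centered_kernel p)"
    "square_integrable (std_sample n) (centered_kernel q)"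
    using assms by (simp_all add: square_integrable_centered_kernel)
  have "(\<integral>x. centered_kernel p x * centered_kernel q x \<partial>std_sample n)
      \<le> (\<integral>x. ((centered_kernel p x)\<^sup>2 + (centered_kernel q x)\<^sup>2) / 2 \<partial>std_sample n)"
  proof (rule integral_mono)
    show "integrable (std_sample n) (\<lambda>x. centered_kernel p x * centered_kernel q x)"
      using sq by (rule square_integrable_mult_integrable)
    show "integrable (std_sample n) (\<lambda>x. ((centered_kernel p x)\<^sup>2 + (centered_kernel q x)\<^sup>2) / 2)"
      using sq unfolding square_integrable_def by simp
    show "centered_kernel p x * centered_kernel q x
        \<le> ((centered_kernel p x)\<^sup>2 + (centered_kernel q x)\<^sup>2) / 2" for x
      using sum_squares_bound[of "centered_kernel p x" "centered_kernel q x"] by simp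
  qed
  also have "\<dots> = var_of (M \<Otimes>\<^sub>M M) h"
    using sq assms unfolding square_integrable_def by (simp add: integral_square_centered_kernel)
  finally show ?thesis .
qed

lemma integral_mult_centered_kernel_disjoint:
  assumes "p \<in> off_diag n" "q \<in> off_diag n" "{fst p, snd p} \<inter> {fst q, snd q} = {}"
  shows "(\<integral>x. centered_kernel p x * centered_kernel q x \<partial>std_sample n) = 0"
proof -
  let ?A = "{fst p, snd p}" and ?B = "{fst q, snd q}" and ?m = "\<integral>z. h z \<partial>(M \<Otimes>\<^sub>M M)"
  have AB: "?A \<subseteq> {..<n}" "?B \<subseteq> {..<n}"
    using assms by (auto simp: mem_off_diag)
  have "0 < n"
    using assms by (auto simp: mem_off_diag)
  have f: "(\<lambda>y. h (y (fst p), y (snd p)) - ?m) \<in> borel_measurable (PiM ?A (\<lambda>_. borel))"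
    and g: "(\<lambda>y. h (y (fst q), y (snd q)) - ?m) \<in> borel_measurable (PiM ?B (\<lambda>_. borel))"
    by (intro borel_measurable_diff borel_measurable_const measurable_compose[OF _ measurable_kernel]
        measurable_Pair measurable_component_singleton; simp)+
  have "(\<integral>x. centered_kernel p x * centered_kernel q x \<partial>std_sample n) =
      (\<integral>x. centered_kernel p x \<partial>std_sample n) * (\<integral>x. centered_kernel q x \<partial>std_sample n)"
    using integral_mult_indep_blocks[OF \<open>0 < n\<close> AB assms(3) f g]
      integrable_centered_kernel[OF assms(1)] integrable_centered_kernel[OF assms(2)]
    by (simp add: centered_kernel_def[abs_def])
  then show ?thesis
    by (simp add: integral_centered_kernel[OF assms(1)])
qed

lemma sum_integral_mult_centered_kernel_le:
  assumes "p \<in> off_diag n"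
  shows "(\<Sum>q\<in>off_diag n. \<integral>x. centered_kernel p x * centered_kernel q x \<partial>std_sample n)
    \<le> 4 * real n * var_of (M \<Otimes>\<^sub>M M) h"
proof -
  let ?V = "var_of (M \<Otimes>\<^sub>M M) h" and ?O = "{q \<in> off_diag n. {fst p, snd p} \<inter> {fst q, snd q} \<noteq> {}}"
  have "(\<Sum>q\<in>off_diag n. \<integral>x. centered_kernel p x * centered_kernel q x \<partial>std_sample n)
      \<le> (\<Sum>q\<in>off_diag n. if q \<in> ?O then ?V else 0)"
    using assms integral_mult_centered_kernel_le integral_mult_centered_kernel_disjoint
    by (intro sum_mono) auto
  also have "\<dots> = real (card ?O) * ?V"
    by (simp add: sum.If_cases Int_def)
  also have "\<dots> \<le> real (4 * n) * ?V"
    using card_off_diag_overlapping[of n p] by (intro mult_right_mono var_of_nonneg) simp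
  finally show ?thesis
    by simp
qed

lemma ustat_eq_centered_kernel:
  assumes "2 \<le> n"
  shows "ustat h n x =
    (\<integral>z. h z \<partial>(M \<Otimes>\<^sub>M M)) + (\<Sum>p\<in>off_diag n. centered_kernel p x) / real (n * (n - 1))"
  using assms by (simp add: ustat_def centered_kernel_def sum_subtractf card_off_diag field_simps)

lemma integral_ustat:
  assumes "2 \<le> n"
  shows "(\<integral>x. ustat h n x \<partial>std_sample n) = (\<integral>z. h z \<partial>(M \<Otimes>\<^sub>M M))"
proof -
  interpret S: prob_space "std_sample n"
    by (rule prob_space_std_sample)
  show ?thesis
    using integrable_centered_kernel
    by (simp add: ustat_eq_centered_kernel[OF assms] integral_centered_kernel S.prob_space)
qed

text \<open>The classical variance bound for a U-statistic of degree two: among the \<open>N\<^sup>2\<close> covariances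
  of its terms, \<open>N = n (n - 1)\<close>, only those of the \<open>O(n\<^sup>3)\<close> overlapping pairs are nonzero.\<close>
lemma var_ustat_le:
  assumes "2 \<le> n"
  shows "var_of (std_sample n) (ustat h n) \<le> 8 * var_of (M \<Otimes>\<^sub>M M) h / real n"
proof -
  let ?N = "real (n * (n - 1))" and ?V = "var_of (M \<Otimes>\<^sub>M M) h" and ?Y = "centered_kernel"
  have N: "0 < ?N" "?N = real n * (real n - 1)"
    using assms by (simp_all add: of_nat_diff)
  have "integrable (std_sample n) (\<lambda>x. ?Y p x * ?Y q x)" if "p \<in> off_diag n" "q \<in> off_diag n" for p q
    using that by (intro square_integrable_mult_integrable square_integrable_centered_kernel)
  then have "var_of (std_sample n) (ustat h n) =
      (\<Sum>p\<in>off_diag n. \<Sum>q\<in>off_diag n. \<integral>x. ?Y p x * ?Y q x \<partial>std_sample n) / ?N\<^sup>2"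
    unfolding var_of_def integral_ustat[OF assms]
    by (simp add: ustat_eq_centered_kernel[OF assms] power_divide power2_eq_square sum_product
        integrable_sum integral_sum)
  also have "\<dots> \<le> (\<Sum>p\<in>off_diag n. 4 * real n * ?V) / ?N\<^sup>2"
    by (intro divide_right_mono sum_mono sum_integral_mult_centered_kernel_le) simp_all
  also have "\<dots> = 4 * real n * ?V / ?N"
    using N(1) by (simp add: card_off_diag power2_eq_square)
  also have "\<dots> = 4 * ?V / (real n - 1)"
    using assms unfolding N(2) by (simp add: field_simps)
  also have "\<dots> \<le> 8 * ?V / real n"
  proof -
    have "2 * ?V \<le> real n * ?V"
      using assms var_of_nonneg[of "M \<Otimes>\<^sub>M M" h] by (intro mult_right_mono) simp_all
    then show ?thesis
      using assms by (simp add: field_simps)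
  qed
  finally show ?thesis .
qed

end

end

section \<open>Gini's mean difference\<close>

definition mean_gini_kernel :: "real \<Rightarrow> real \<Rightarrow> real \<times> real \<Rightarrow> real" where
  "mean_gini_kernel a b z = a * (fst z + snd z) / 2 + b * \<bar>fst z - snd z\<bar>"

lemma measurable_mean_gini_kernel [measurable]:
  "mean_gini_kernel a b \<in> borel_measurable (borel \<Otimes>\<^sub>M borel)"
  unfolding mean_gini_kernel_def[abs_def] by measurable

lemma mean_gini_kernel_eq: "mean_gini_kernel a b (u, v) = a / 2 * u + a / 2 * v + b * \<bar>u - v\<bar>"
  unfolding mean_gini_kernel_def by (simp add: field_simps)

text \<open>\<open>a\<close> times the sample mean plus \<open>b\<close> times Gini's mean difference, written as a linear
  function of the order statistics by Gini's identity.\<close>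
definition gini_coeff :: "real \<Rightarrow> real \<Rightarrow> nat \<Rightarrow> nat \<Rightarrow> real" where
  "gini_coeff a b n i = a / real n + 2 * b * (\<Sum>j<n. sgn (real i - real j)) / real (n * (n - 1))"

lemma sum_gini_coeff:
  assumes "2 \<le> n"
  shows "(\<Sum>i<n. gini_coeff a b n i) = a"
proof -
  have "(\<Sum>i<n. gini_coeff a b n i) =
      (\<Sum>i<n. a / real n) + 2 * b * (\<Sum>i<n. \<Sum>j<n. sgn (real i - real j)) / real (n * (n - 1))"
    unfolding gini_coeff_def by (simp add: sum.distrib sum_distrib_left sum_divide_distrib)
  then show ?thesis
    using assms by (simp add: sum_sgn_diff_eq_zero)
qed

lemma ustat_mean_gini_kernel:
  assumes "2 \<le> n"
  shows "ustat (mean_gini_kernel a b) n x = lin_est n (gini_coeff a b n) x"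
proof -
  let ?s = "ord_stat n x" and ?N = "real (n * (n - 1))"
  let ?S = "\<lambda>i. \<Sum>j<n. sgn (real i - real j) :: real"
  have N: "?N = real n * (real n - 1)" "1 < real n"
    using assms by (simp_all add: of_nat_diff)
  have sum_x: "(\<Sum>i<n. x i) = (\<Sum>i<n. ?s i)"
    using sum_ord_stat[where g="\<lambda>v. v"] by simp
  have rows: "(\<Sum>i<n. \<Sum>j<n. x i) = real n * (\<Sum>i<n. x i)"
    by (simp add: sum_distrib_left)
  have cols: "(\<Sum>i<n. \<Sum>j<n. x j) = real n * (\<Sum>i<n. x i)"
    by simp
  have "(\<Sum>p\<in>off_diag n. mean_gini_kernel a b (x (fst p), x (snd p))) =
      (\<Sum>i<n. \<Sum>j<n. a / 2 * x i + a / 2 * x j + b * \<bar>x i - x j\<bar>) - (\<Sum>i<n. a * x i)"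
    using sum_off_diag[where f="\<lambda>i j. mean_gini_kernel a b (x i, x j)"]
    by (simp add: mean_gini_kernel_eq)
  also have "\<dots> = a / 2 * (\<Sum>i<n. \<Sum>j<n. x i) + a / 2 * (\<Sum>i<n. \<Sum>j<n. x j)
      + b * (\<Sum>i<n. \<Sum>j<n. \<bar>x i - x j\<bar>) - a * (\<Sum>i<n. x i)"
    by (simp only: sum.distrib sum_distrib_left)
  also have "\<dots> = a * (real n - 1) * (\<Sum>i<n. ?s i) + 2 * b * (\<Sum>i<n. ?S i * ?s i)"
    unfolding rows cols sum_abs_diff_eq_ord_stat sum_x by (simp add: algebra_simps)
  finally have "ustat (mean_gini_kernel a b) n x =
      (a * (real n - 1) * (\<Sum>i<n. ?s i) + 2 * b * (\<Sum>i<n. ?S i * ?s i)) / ?N"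
    unfolding ustat_def by simp
  also have "\<dots> = a / real n * (\<Sum>i<n. ?s i) + 2 * b / ?N * (\<Sum>i<n. ?S i * ?s i)"
    unfolding N(1) using N(2) by (simp add: field_simps)
  also have "\<dots> = lin_est n (gini_coeff a b n) x"
  proof -
    have "gini_coeff a b n i * ?s i = a / real n * ?s i + 2 * b / ?N * (?S i * ?s i)" for i
      unfolding gini_coeff_def by (simp add: distrib_right)
    then show ?thesis
      unfolding lin_est_def by (simp add: sum.distrib sum_distrib_left)
  qed
  finally show ?thesis .
qed

context iid_std_sample_L2
begin

lemma integrable_id: "integrable M (\<lambda>x. x)"
  using square_integrable_imp_integrable[OF _ integrable_square] by simp

definition gini_mean_diff :: real where
  "gini_mean_diff = (\<integral>z. \<bar>fst z - snd z\<bar> \<partial>(M \<Otimes>\<^sub>M M))"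

lemma integral_abs_diff_std_sample: "(\<integral>x. \<bar>x 0 - x 1\<bar> \<partial>std_sample 2) = gini_mean_diff"
  unfolding gini_mean_diff_def
  by (rule integral_pair_std_sample[where h="\<lambda>z. \<bar>fst z - snd z\<bar>", simplified]) simp_all

lemma integrable_square_mean_gini_kernel: "integrable (M \<Otimes>\<^sub>M M) (\<lambda>z. (mean_gini_kernel a b z)\<^sup>2)"
proof -
  have "square_integrable (std_sample 2) (\<lambda>x. a / 2 * x 0 + a / 2 * x 1 + b * \<bar>x 0 - x 1\<bar>)"
    by (intro square_integrable_add square_integrable_cmult square_integrable_abs
        square_integrable_diff square_integrable_component) simp_all
  then show ?thesis
    unfolding square_integrable_def
    by (subst integrable_pair_std_sample_iff[symmetric, of 0 2 1])
      (simp_all add: mean_gini_kernel_eq)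
qed

lemma integral_mean_gini_kernel:
  "(\<integral>z. mean_gini_kernel a b z \<partial>(M \<Otimes>\<^sub>M M)) = a * (\<integral>x. x \<partial>M) + b * gini_mean_diff"
proof -
  have comp: "integrable (std_sample 2) (\<lambda>x. x i)" "(\<integral>x. x i \<partial>std_sample 2) = (\<integral>x. x \<partial>M)"
    if "i < 2" for i
    using that integrable_component_std_sample[OF _ integrable_id]
      integral_component_std_sample[of i 2 "\<lambda>x. x"]
    by simp_all
  have "(\<integral>z. mean_gini_kernel a b z \<partial>(M \<Otimes>\<^sub>M M)) =
      (\<integral>x. a / 2 * x 0 + a / 2 * x 1 + b * \<bar>x 0 - x 1\<bar> \<partial>std_sample 2)"
    by (subst integral_pair_std_sample[symmetric, of 0 2 1]) (simp_all add: mean_gini_kernel_eq)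
  also have "\<dots> = a / 2 * (\<integral>x. x 0 \<partial>std_sample 2) + a / 2 * (\<integral>x. x 1 \<partial>std_sample 2)
      + b * (\<integral>x. \<bar>x 0 - x 1\<bar> \<partial>std_sample 2)"
    using comp[of 0] comp[of 1] by simp
  finally show ?thesis
    using comp by (simp add: integral_abs_diff_std_sample[simplified] field_simps)
qed

lemma exp_ord_stat_gini_coeff:
  assumes "2 \<le> n"
  shows "(\<Sum>i<n. gini_coeff a b n i * exp_ord_stat n i) = a * (\<integral>x. x \<partial>M) + b * gini_mean_diff"
proof -
  have "lin_est n (gini_coeff a b n) = ustat (mean_gini_kernel a b) n"
    using ustat_mean_gini_kernel[OF assms] by auto
  then show ?thesis
    using integral_ustat[OF measurable_mean_gini_kernel integrable_square_mean_gini_kernel assms]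
    by (simp add: integral_lin_est[symmetric] integral_mean_gini_kernel)
qed

lemma var_lin_est_gini_coeff_le:
  assumes "2 \<le> n"
  shows "var_of (std_sample n) (lin_est n (gini_coeff a b n))
    \<le> 8 * var_of (M \<Otimes>\<^sub>M M) (mean_gini_kernel a b) / real n"
proof -
  have "lin_est n (gini_coeff a b n) = ustat (mean_gini_kernel a b) n"
    using ustat_mean_gini_kernel[OF assms] by auto
  then show ?thesis
    using var_ustat_le[OF measurable_mean_gini_kernel integrable_square_mean_gini_kernel assms]
    by simp
qed

text \<open>Gini's mean difference vanishes only for a degenerate distribution, because
  \<open>E (X\<^sub>1 - X\<^sub>2)\<^sup>2 = 2 Var X\<^sub>1\<close> for independent copies.\<close>
lemma gini_mean_diff_pos:
  assumes "0 < var_of M (\<lambda>x. x)"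
  shows "0 < gini_mean_diff"
proof -
  interpret S: prob_space "std_sample 2"
    by (rule prob_space_std_sample)
  let ?m = "\<integral>x. x \<partial>M" and ?c = "\<lambda>i x. x i - (\<integral>x. x \<partial>M)"
  have sq_c: "square_integrable (std_sample 2) (?c i)" if "i < 2" for i
    using that by (intro square_integrable_diff square_integrable_component square_integrable_const
        finite_measure_std_sample)
  have var_c: "(\<integral>x. (?c i x)\<^sup>2 \<partial>std_sample 2) = var_of M (\<lambda>x. x)" if "i < 2" for i
    unfolding var_of_def using that by (intro integral_component_std_sample) simp_all
  have mean_c: "(\<integral>x. ?c i x \<partial>std_sample 2) = 0" if "i < 2" for i
    using that integrable_component_std_sample[OF _ integrable_id]
      integral_component_std_sample[of i 2 "\<lambda>x. x"]
    by (simp add: S.prob_space)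
  have "(\<integral>x. ?c 0 x * ?c 1 x \<partial>std_sample 2) =
      (\<integral>x. ?c 0 x \<partial>std_sample 2) * (\<integral>x. ?c 1 x \<partial>std_sample 2)"
    using integral_mult_indep_blocks[of 2 "{0}" "{1}" "\<lambda>y. y 0 - ?m" "\<lambda>y. y 1 - ?m"]
      square_integrable_integrable[OF finite_measure_std_sample sq_c] by simp
  then have cov: "(\<integral>x. ?c 0 x * ?c 1 x \<partial>std_sample 2) = 0"
    by (simp add: mean_c)
  have "(\<integral>x. (x 0 - x 1)\<^sup>2 \<partial>std_sample 2) =
      (\<integral>x. (?c 0 x)\<^sup>2 + (?c 1 x)\<^sup>2 - 2 * (?c 0 x * ?c 1 x) \<partial>std_sample 2)"
    by (simp add: power2_eq_square algebra_simps)
  also have "\<dots> = 2 * var_of M (\<lambda>x. x)"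
    using sq_c square_integrable_mult_integrable[OF sq_c sq_c, of 0 1] var_c cov
    unfolding square_integrable_def by simp
  finally have sq_diff: "(\<integral>x. (x 0 - x 1)\<^sup>2 \<partial>std_sample 2) = 2 * var_of M (\<lambda>x. x)" .
  have int_abs: "integrable (std_sample 2) (\<lambda>x. \<bar>x 0 - x 1\<bar>)"
    using integrable_component_std_sample[OF _ integrable_id, of _ 2] by simp
  show ?thesis
  proof (rule ccontr)
    assume "\<not> 0 < gini_mean_diff"
    moreover have "0 \<le> gini_mean_diff"
      unfolding integral_abs_diff_std_sample[symmetric] by simp
    ultimately have "(\<integral>x. \<bar>x 0 - x 1\<bar> \<partial>std_sample 2) = 0"
      unfolding integral_abs_diff_std_sample by simp
    then have "AE x in std_sample 2. (x 0 - x 1)\<^sup>2 = 0"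
      using integral_nonneg_eq_0_iff_AE[OF int_abs] by simp
    then have "(\<integral>x. (x 0 - x 1)\<^sup>2 \<partial>std_sample 2) = 0"
      by (simp add: integral_eq_zero_AE)
    with sq_diff assms show False
      by simp
  qed
qed

end

section \<open>Existence and variance of the BLUE\<close>

lemma sum_lincomb_swap:
  fixes u :: "'j \<Rightarrow> real" and d :: "'j \<Rightarrow> 'i \<Rightarrow> real" and a :: "'i \<Rightarrow> real"
  shows "(\<Sum>i\<in>I. (\<Sum>j\<in>J. u j * d j i) * a i) = (\<Sum>j\<in>J. u j * (\<Sum>i\<in>I. d j i * a i))"
proof -
  have "(\<Sum>i\<in>I. (\<Sum>j\<in>J. u j * d j i) * a i) = (\<Sum>i\<in>I. \<Sum>j\<in>J. u j * (d j i * a i))"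
    by (simp add: sum_distrib_right mult.assoc)
  also have "\<dots> = (\<Sum>j\<in>J. \<Sum>i\<in>I. u j * (d j i * a i))"
    by (rule sum.swap)
  finally show ?thesis
    by (simp add: sum_distrib_left)
qed

lemma lin_est_add_lincomb:
  "lin_est n (\<lambda>i. c i + (\<Sum>j\<in>J. u j * d j i)) x = lin_est n c x + (\<Sum>j\<in>J. u j * lin_est n (d j) x)"
  unfolding lin_est_def by (simp add: distrib_right sum.distrib sum_lincomb_swap)

locale iid_std_sample_nondeg = iid_std_sample_L2 +
  assumes variance_pos: "0 < var_of M (\<lambda>x. x)"
begin

lemma gini_mean_diff_gt_0: "0 < gini_mean_diff"
  by (rule gini_mean_diff_pos[OF variance_pos])

definition gini_estimator :: "nat \<Rightarrow> nat \<Rightarrow> nat \<Rightarrow> real" where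
  "gini_estimator k n =
    gini_coeff (loc_coeff k) ((scale_coeff k - loc_coeff k * (\<integral>x. x \<partial>M)) / gini_mean_diff) n"

lemma unbiased_gini_estimator: "2 \<le> n \<Longrightarrow> unbiased M k n (gini_estimator k n)"
  unfolding unbiased_iff gini_estimator_def
  using gini_mean_diff_gt_0 by (simp add: sum_gini_coeff exp_ord_stat_gini_coeff)

lemma var_gini_estimator_le:
  "\<exists>C. \<forall>n\<ge>2. var_of (std_sample n) (lin_est n (gini_estimator k n)) \<le> C / real n"
  unfolding gini_estimator_def using var_lin_est_gini_coeff_le by blast

text \<open>Moving the coefficients of an unbiased estimator along \<open>null_dir n j\<close> preserves both
  \<open>\<Sum> c\<^sub>i\<close> and \<open>\<Sum> c\<^sub>i \<alpha>\<^sub>i\<^sub>:\<^sub>n\<close>, and these directions span all such moves; this turns the search for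
  the BLUE into an unconstrained least-squares problem.\<close>
definition null_dir :: "nat \<Rightarrow> nat \<Rightarrow> nat \<Rightarrow> real" where
  "null_dir n j i = (if i = j then 1 else 0) - gini_coeff 1 0 n i
    - (exp_ord_stat n j - (\<integral>x. x \<partial>M)) / gini_mean_diff * gini_coeff 0 1 n i"

lemma sum_null_dir_mult:
  assumes "j < n"
  shows "(\<Sum>i<n. null_dir n j i * a i) = a j - (\<Sum>i<n. gini_coeff 1 0 n i * a i)
    - (exp_ord_stat n j - (\<integral>x. x \<partial>M)) / gini_mean_diff * (\<Sum>i<n. gini_coeff 0 1 n i * a i)"
proof -
  have "(if i = j then 1 else 0) * a i = (if i = j then a j else 0)" for i
    by simp
  then show ?thesis
    using assms
    by (simp add: null_dir_def left_diff_distrib sum_subtractf sum_distrib_left mult.assoc)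
qed

lemma sum_null_dir: "2 \<le> n \<Longrightarrow> j < n \<Longrightarrow> (\<Sum>i<n. null_dir n j i) = 0"
  using sum_null_dir_mult[of j n "\<lambda>_. 1"] by (simp add: sum_gini_coeff)

lemma sum_null_dir_exp_ord_stat: "2 \<le> n \<Longrightarrow> j < n \<Longrightarrow> (\<Sum>i<n. null_dir n j i * exp_ord_stat n i) = 0"
  using sum_null_dir_mult[of j n "exp_ord_stat n"] gini_mean_diff_gt_0
  by (simp add: exp_ord_stat_gini_coeff)

lemma lincomb_null_dir:
  assumes "(\<Sum>j<n. w j) = 0" "(\<Sum>j<n. w j * exp_ord_stat n j) = 0" "i < n"
  shows "(\<Sum>j<n. w j * null_dir n j i) = w i"
proof -
  have "w j * null_dir n j i = (if i = j then w j else 0) - w j * gini_coeff 1 0 n i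
      - (w j * exp_ord_stat n j - (\<integral>x. x \<partial>M) * w j) / gini_mean_diff * gini_coeff 0 1 n i" for j
    by (simp add: null_dir_def algebra_simps)
  then have "(\<Sum>j<n. w j * null_dir n j i) = w i - (\<Sum>j<n. w j) * gini_coeff 1 0 n i
      - ((\<Sum>j<n. w j * exp_ord_stat n j) - (\<integral>x. x \<partial>M) * (\<Sum>j<n. w j)) / gini_mean_diff * gini_coeff 0 1 n i"
    using assms(3)
    by (simp add: sum_subtractf flip: sum_distrib_left sum_distrib_right sum_divide_distrib)
  then show ?thesis
    using assms(1,2) by simp
qed

lemma BLUE_exists:
  assumes "2 \<le> n"
  shows "\<exists>c. is_BLUE M k n c"
proof -
  let ?c0 = "gini_estimator k n" and ?D = "\<lambda>j. lin_est n (null_dir n j)"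
  let ?E = "\<lambda>x. lin_est n ?c0 x - scale_coeff k"
  let ?shift = "\<lambda>v i. ?c0 i + (\<Sum>j<n. v j * null_dir n j i)"
  have unbiased_shift: "unbiased M k n (?shift v)" for v
  proof -
    have "(\<Sum>i<n. ?shift v i) = (\<Sum>i<n. ?c0 i) + (\<Sum>j<n. v j * (\<Sum>i<n. null_dir n j i))"
      using sum_lincomb_swap[where u=v and d="null_dir n" and a="\<lambda>_. 1" and I="{..<n}" and J="{..<n}"]
      by (simp add: sum.distrib)
    moreover have "(\<Sum>i<n. ?shift v i * exp_ord_stat n i) =
        (\<Sum>i<n. ?c0 i * exp_ord_stat n i) + (\<Sum>j<n. v j * (\<Sum>i<n. null_dir n j i * exp_ord_stat n i))"
      by (simp add: distrib_right sum.distrib sum_lincomb_swap)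
    ultimately show ?thesis
      using unbiased_gini_estimator[OF assms] assms
      by (simp add: unbiased_iff sum_null_dir sum_null_dir_exp_ord_stat)
  qed
  have var_shift: "var_of (std_sample n) (lin_est n (?shift v)) =
      (\<integral>x. (?E x + (\<Sum>j<n. v j * ?D j x))\<^sup>2 \<partial>std_sample n)" for v
    unfolding var_of_unbiased[OF unbiased_shift] lin_est_add_lincomb by (simp add: algebra_simps)
  have "square_integrable (std_sample n) ?E"
    by (intro square_integrable_diff square_integrable_lin_est square_integrable_const
        finite_measure_std_sample)
  then obtain u where u: "\<And>v. (\<integral>x. (?E x + (\<Sum>j<n. u j * ?D j x))\<^sup>2 \<partial>std_sample n)
      \<le> (\<integral>x. (?E x + (\<Sum>j<n. v j * ?D j x))\<^sup>2 \<partial>std_sample n)"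
    using least_squares_exists[of "{..<n}" "std_sample n" ?E ?D] square_integrable_lin_est by auto
  show ?thesis
  proof (intro exI is_BLUE_if_min_var)
    show "unbiased M k n (?shift u)"
      by (rule unbiased_shift)
    fix c
    assume "unbiased M k n c"
    then have "(\<Sum>j<n. c j - ?c0 j) = 0" "(\<Sum>j<n. (c j - ?c0 j) * exp_ord_stat n j) = 0"
      using unbiased_gini_estimator[OF assms]
      by (simp_all add: unbiased_iff sum_subtractf left_diff_distrib)
    then have "lin_est n c = lin_est n (?shift (\<lambda>j. c j - ?c0 j))"
      by (intro lin_est_cong) (simp add: lincomb_null_dir)
    then show "var_of (std_sample n) (lin_est n (?shift u)) \<le> var_of (std_sample n) (lin_est n c)"
      using u by (simp add: var_shift)
  qed
qed

lemma var_BLUE_bound: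
  assumes "\<forall>n\<ge>2. is_BLUE M k n (c n)" "0 < t2"
  shows "\<exists>C. \<forall>n\<ge>2. var_of (sample M n t1 t2) (lin_est n (c n)) \<le> C / real n"
proof -
  obtain C where C: "\<forall>n\<ge>2. var_of (std_sample n) (lin_est n (gini_estimator k n)) \<le> C / real n"
    using var_gini_estimator_le by blast
  have "var_of (sample M n t1 t2) (lin_est n (c n)) \<le> t2\<^sup>2 * C / real n" if "2 \<le> n" for n
  proof -
    have "var_of (sample M n t1 t2) (lin_est n (c n))
        \<le> var_of (sample M n t1 t2) (lin_est n (gini_estimator k n))"
      using assms that unbiased_gini_estimator[OF that] unfolding is_BLUE_def by blast
    also have "\<dots> \<le> t2\<^sup>2 * (C / real n)"
      unfolding var_lin_est_sample[OF less_imp_le[OF assms(2)]]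
      using C that by (intro mult_left_mono) simp_all
    finally show ?thesis
      by simp
  qed
  then show ?thesis
    by blast
qed

end

section \<open>Consistency\<close>

lemma (in prob_space) prob_dev_gt_le_var_of:
  assumes [measurable]: "f \<in> borel_measurable M" and "integrable M (\<lambda>x. (f x)\<^sup>2)" "0 < e"
  shows "prob {x \<in> space M. e < \<bar>f x - expectation f\<bar>} \<le> var_of M f / e\<^sup>2"
proof -
  have "prob {x \<in> space M. e < \<bar>f x - expectation f\<bar>}
      \<le> prob {x \<in> space M. e \<le> \<bar>f x - expectation f\<bar>}"
    by (intro finite_measure_mono) auto
  also have "\<dots> \<le> variance f / e\<^sup>2"
    using assms by (intro Chebyshev_inequality) simp_all
  finally show ?thesis
    unfolding var_of_def .
qed

lemma consistent_if_var_le: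
  fixes N :: "nat \<Rightarrow> 'a measure" and f :: "nat \<Rightarrow> 'a \<Rightarrow> real"
  assumes "\<And>n. m \<le> n \<Longrightarrow> prob_space (N n)"
    and "\<And>n. m \<le> n \<Longrightarrow> square_integrable (N n) (f n)"
    and "\<And>n. m \<le> n \<Longrightarrow> (\<integral>x. f n x \<partial>N n) = \<theta>"
    and "\<And>n. m \<le> n \<Longrightarrow> var_of (N n) (f n) \<le> C / real n"
    and "0 < e"
  shows "(\<lambda>n. measure (N n) {x \<in> space (N n). e < \<bar>f n x - \<theta>\<bar>}) \<longlonglongrightarrow> 0"
proof (rule tendsto_sandwich[OF _ _ tendsto_const lim_const_over_n])
  show "eventually (\<lambda>n. 0 \<le> measure (N n) {x \<in> space (N n). e < \<bar>f n x - \<theta>\<bar>}) sequentially"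
    by simp
  show "eventually
      (\<lambda>n. measure (N n) {x \<in> space (N n). e < \<bar>f n x - \<theta>\<bar>} \<le> C / e\<^sup>2 / real n) sequentially"
    unfolding eventually_sequentially
  proof (intro exI allI impI)
    fix n
    assume "m \<le> n"
    interpret prob_space "N n"
      using assms(1) \<open>m \<le> n\<close> .
    have "measure (N n) {x \<in> space (N n). e < \<bar>f n x - \<theta>\<bar>} \<le> var_of (N n) (f n) / e\<^sup>2"
      using prob_dev_gt_le_var_of[of "f n" e] assms(2,3,5) \<open>m \<le> n\<close> unfolding square_integrable_def
      by simp
    also have "\<dots> \<le> C / real n / e\<^sup>2"
      using assms(4)[OF \<open>m \<le> n\<close>] by (rule divide_right_mono) simp
    finally show "measure (N n) {x \<in> space (N n). e < \<bar>f n x - \<theta>\<bar>} \<le> C / e\<^sup>2 / real n"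
      by (simp add: mult.commute)
  qed
qed

lemma bigo_inverse_if_le:
  fixes g :: "nat \<Rightarrow> real"
  assumes "\<And>n. m \<le> n \<Longrightarrow> 0 \<le> g n \<and> g n \<le> C / real n"
  shows "g \<in> O(\<lambda>n. 1 / real n)"
proof (rule bigoI[where c=C])
  show "eventually (\<lambda>n. norm (g n) \<le> C * norm (1 / real n)) at_top"
    unfolding eventually_at_top_linorder
  proof (intro exI[of _ m] allI impI)
    fix n
    assume "m \<le> n"
    then show "norm (g n) \<le> C * norm (1 / real n)"
      using assms[of n] by simp
  qed
qed

theorem lemma2p1:
  fixes M :: "real measure" and k :: nat
  assumes "real_distribution M"
    and "integrable M (\<lambda>x. x\<^sup>2)"
    and "var_of M (\<lambda>x. x) > 0"
    and "k \<in> {1, 2}"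
  shows "(\<forall>n\<ge>2. \<exists>c. is_BLUE M k n c) \<and>
    (\<forall>c :: nat \<Rightarrow> nat \<Rightarrow> real. (\<forall>n\<ge>2. is_BLUE M k n (c n)) \<longrightarrow>
      (\<forall>t1 t2. t2 > 0 \<longrightarrow>
         (\<forall>\<epsilon>>0. (\<lambda>n. measure (sample M n t1 t2)
                 {x \<in> space (sample M n t1 t2). \<bar>lin_est n (c n) x - theta k t1 t2\<bar> > \<epsilon>})
               \<longlonglongrightarrow> 0) \<and>
         (\<lambda>n. var_of (sample M n t1 t2) (lin_est n (c n))) \<in> O(\<lambda>n. 1 / real n)))"
proof -
  interpret iid_std_sample_nondeg M
    by (intro iid_std_sample_nondeg.intro iid_std_sample_L2.intro iid_std_sample_nondeg_axioms.intro
        iid_std_sample_L2_axioms.intro assms(2,3)) (simp add: iid_std_sample_def assms(1))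
  show ?thesis
  proof (intro conjI allI impI)
    show "\<exists>c. is_BLUE M k n c" if "2 \<le> n" for n
      using that by (rule BLUE_exists)
  next
    fix c :: "nat \<Rightarrow> nat \<Rightarrow> real" and t1 t2 \<epsilon> :: real
    assume BLUE: "\<forall>n\<ge>2. is_BLUE M k n (c n)" and "0 < t2" and "0 < \<epsilon>"
    obtain C where "\<forall>n\<ge>2. var_of (sample M n t1 t2) (lin_est n (c n)) \<le> C / real n"
      using var_BLUE_bound[OF BLUE \<open>0 < t2\<close>] by blast
    then show "(\<lambda>n. measure (sample M n t1 t2)
        {x \<in> space (sample M n t1 t2). \<bar>lin_est n (c n) x - theta k t1 t2\<bar> > \<epsilon>}) \<longlonglongrightarrow> 0"
      using BLUE \<open>0 < t2\<close> \<open>0 < \<epsilon>\<close> prob_space_sample square_integrable_lin_est_sample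
      by (intro consistent_if_var_le[where m=2 and C=C]) (auto simp: is_BLUE_def unbiased_def)
  next
    fix c :: "nat \<Rightarrow> nat \<Rightarrow> real" and t1 t2 :: real
    assume BLUE: "\<forall>n\<ge>2. is_BLUE M k n (c n)" and "0 < t2"
    obtain C where "\<forall>n\<ge>2. var_of (sample M n t1 t2) (lin_est n (c n)) \<le> C / real n"
      using var_BLUE_bound[OF BLUE \<open>0 < t2\<close>] by blast
    then show "(\<lambda>n. var_of (sample M n t1 t2) (lin_est n (c n))) \<in> O(\<lambda>n. 1 / real n)"
      by (intro bigo_inverse_if_le[where m=2 and C=C]) (simp add: var_of_nonneg)
  qed
qed

end
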